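(* Let $w\in W_n$ have first right descent at $k\geq0$, let $\gamma$ be its A-code, $m=\ell(\mu(w))$, $\beta=\beta(w)$, and for $s\geq1$ let $\phi_s:=\#\{i\in[1,k]\mid\gamma_i\geq s\}$. (a) If $\beta_{s+1}>\beta_s+1$, then $|\beta_s|$ is a left descent of $w$. (b) If $s\leq m$, then $\phi_s=k$, while if $s>m$ and $\beta_{s+1}=\beta_s+1$, then $\phi_s=\phi_{s+1}$.
   Context: $W_n$: signed permutations $w=(w_1,\ldots,w_n)$ of $\{1,\ldots,n\}$. $w$ has a right descent at $0$ iff $w_1<0$ and at $i\geq1$ iff $w_i>w_{i+1}$; the first right descent is the smallest such index. $w$ has a left descent at $0$ iff $-1$ is an entry of $w$, and at $i\geq1$ iff $w$ has one of the forms $(\cdots i{+}1\cdots i\cdots)$, $(\cdots i\cdots\overline{i{+}1}\cdots)$, $(\cdots\overline{i{+}1}\cdots i\cdots)$, $(\cdots\bar i\cdots\overline{i{+}1}\cdots)$, where $\bar a=-a$. A-code: $\gamma_i:=\#\{j>i\mid w_j<w_i\}$. $\mu(w)$ is the strict partition of absolute values of the negative entries. Listing $w_{k+1},\ldots,w_n$ increasingly as $u_1<\cdots<u_m<0<u_{m+1}<\cdots<u_{n-k}$, $\beta(w):=(u_1+1,\ldots,u_m+1,u_{m+1},\ldots,u_{n-k})$; indices $s$ in the statement satisfy $1\leq s<n-k$ where $\beta_{s+1}$ is referenced. *)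

theory Defs
  imports Main
begin

text \<open>A signed permutation w in W_n is represented by its window notation as a
function w :: nat => int, where w i is the entry at position i (1 <= i <= n);
values outside {1..n} are irrelevant. Negative entries stand for barred letters.\<close>

definition signed_perm :: "nat \<Rightarrow> (nat \<Rightarrow> int) \<Rightarrow> bool" where
  "signed_perm n w \<longleftrightarrow> bij_betw (\<lambda>i. nat \<bar>w i\<bar>) {1..n} {1..n}"

definition right_descent :: "nat \<Rightarrow> (nat \<Rightarrow> int) \<Rightarrow> nat \<Rightarrow> bool" where
  "right_descent n w i \<longleftrightarrow>
     (i = 0 \<and> 1 \<le> n \<and> w 1 < 0) \<or> (1 \<le> i \<and> i < n \<and> w i > w (i + 1))"

definition first_right_descent :: "nat \<Rightarrow> (nat \<Rightarrow> int) \<Rightarrow> nat \<Rightarrow> bool" where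
  "first_right_descent n w k \<longleftrightarrow>
     right_descent n w k \<and> (\<forall>j<k. \<not> right_descent n w j)"

definition left_descent :: "nat \<Rightarrow> (nat \<Rightarrow> int) \<Rightarrow> nat \<Rightarrow> bool" where
  "left_descent n w i \<longleftrightarrow>
     (i = 0 \<and> (\<exists>j\<in>{1..n}. w j = -1)) \<or>
     (1 \<le> i \<and> i < n \<and>
       (\<exists>p\<in>{1..n}. \<exists>q\<in>{1..n}. p < q \<and>
          ((w p = int i + 1 \<and> w q = int i) \<or>
           (w p = int i \<and> w q = -(int i + 1)) \<or>
           (w p = -(int i + 1) \<and> w q = int i) \<or>
           (w p = - int i \<and> w q = -(int i + 1)))))"

definition acode :: "nat \<Rightarrow> (nat \<Rightarrow> int) \<Rightarrow> nat \<Rightarrow> nat" where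
  "acode n w i = card {j. i < j \<and> j \<le> n \<and> w j < w i}"

definition mu :: "nat \<Rightarrow> (nat \<Rightarrow> int) \<Rightarrow> nat list" where
  "mu n w = rev (sorted_list_of_set {nat (- w j) | j. j \<in> {1..n} \<and> w j < 0})"

definition beta :: "nat \<Rightarrow> (nat \<Rightarrow> int) \<Rightarrow> nat \<Rightarrow> nat \<Rightarrow> int" where
  "beta n w k s =
     (let u = sorted_list_of_set (w ` {k+1..n}) ! (s - 1) in if u < 0 then u + 1 else u)"

definition phi :: "nat \<Rightarrow> (nat \<Rightarrow> int) \<Rightarrow> nat \<Rightarrow> nat \<Rightarrow> nat" where
  "phi n w k s = card {i \<in> {1..k}. acode n w i \<ge> s}"

end

theory Submission
  imports Defs
begin

text \<open>Since k is the first right descent, 0 < w_1 < ... < w_k. Hence every negative entry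
  lies in the suffix w_{k+1}, ..., w_n, and for i \<le> k the A-code \<gamma>_i is the rank of w_i among
  the sorted suffix values u_1 < ... < u_{n-k}: \<gamma>_i \<ge> s iff w_i > u_s.
  For (b): all m negative suffix values lie below w_i, so \<gamma>_i \<ge> m; and for s > m we have
  u_s > 0, so \<beta>_{s+1} = \<beta>_s + 1 means u_{s+1} = u_s + 1, which leaves no room for a prefix value
  of rank exactly s.
  For (a): the gap says that u_s + 1 is not a suffix value. If u_s = i > 0, the letter i + 1
  occurs either positively in the prefix, hence before i, or negatively; if u_s = -(i + 1) \<le> -2,
  the letter i cannot occur negatively, hence occurs positively. Either way one of the four
  patterns of a left descent at i = |\<beta>_s| appears; u_s = -1 gives the left descent 0.\<close>

lemma sorted_list_of_set_nth_less_iff: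
  fixes U :: "'a::linorder set"
  assumes "finite U" "i < card U" "j < card U"
  shows "sorted_list_of_set U ! i < sorted_list_of_set U ! j \<longleftrightarrow> i < j"
proof
  let ?L = "sorted_list_of_set U"
  have sorted: "sorted_wrt (<) ?L" and len: "length ?L = card U"
    by simp_all
  show "i < j" if "?L ! i < ?L ! j"
  proof (rule ccontr)
    assume "\<not> i < j"
    then have "?L ! j \<le> ?L ! i"
      using sorted_wrt_nth_less[OF sorted, of j i] assms len by (cases "i = j") auto
    then show False
      using that by simp
  qed
  show "?L ! i < ?L ! j" if "i < j"
    using sorted_wrt_nth_less[OF sorted] that assms len by simp
qed

lemma obtain_index_sorted_list_of_set:
  assumes "finite U" "x \<in> U"
  obtains r where "r < card U" "x = sorted_list_of_set U ! r"
proof -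
  have "x \<in> set (sorted_list_of_set U)"
    using assms by simp
  then show ?thesis
    using that by (auto simp: in_set_conv_nth)
qed

lemma nth_sorted_list_of_set_mem:
  assumes "finite U" "t < card U"
  shows "sorted_list_of_set U ! t \<in> U"
  using assms by (metis length_sorted_list_of_set nth_mem set_sorted_list_of_set)

lemma card_less_nth_sorted_list_of_set:
  fixes U :: "'a::linorder set"
  assumes "finite U" "t < card U"
  shows "card {x \<in> U. x < sorted_list_of_set U ! t} = t"
proof -
  let ?L = "sorted_list_of_set U"
  have "{x \<in> U. x < ?L ! t} = (!) ?L ` {..<t}"
  proof (intro set_eqI iffI)
    fix x assume "x \<in> {x \<in> U. x < ?L ! t}"
    then obtain r where "r < card U" "x = ?L ! r" "?L ! r < ?L ! t"
      using obtain_index_sorted_list_of_set[OF assms(1)] by blast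
    then show "x \<in> (!) ?L ` {..<t}"
      using sorted_list_of_set_nth_less_iff[OF assms(1)] assms(2) by auto
  next
    fix x assume "x \<in> (!) ?L ` {..<t}"
    then obtain r where "r < t" "x = ?L ! r"
      by auto
    then show "x \<in> {x \<in> U. x < ?L ! t}"
      using assms sorted_list_of_set_nth_less_iff[OF assms(1), of r t]
        nth_sorted_list_of_set_mem[OF assms(1), of r] by simp
  qed
  moreover have "inj_on ((!) ?L) {..<t}"
    using assms by (intro inj_onI) (simp add: nth_eq_iff_index_eq)
  ultimately show ?thesis
    by (simp add: card_image)
qed

lemma card_less_le_iff_le_nth_sorted_list_of_set:
  fixes U :: "'a::linorder set"
  assumes "finite U" "t < card U"
  shows "card {x \<in> U. x < c} \<le> t \<longleftrightarrow> c \<le> sorted_list_of_set U ! t"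
proof
  let ?u = "sorted_list_of_set U ! t"
  have u_mem: "?u \<in> U"
    using nth_sorted_list_of_set_mem[OF assms] .
  show "c \<le> ?u" if "card {x \<in> U. x < c} \<le> t"
  proof (rule ccontr)
    assume "\<not> c \<le> ?u"
    then have "insert ?u {x \<in> U. x < ?u} \<subseteq> {x \<in> U. x < c}"
      using u_mem by auto
    then have "card (insert ?u {x \<in> U. x < ?u}) \<le> card {x \<in> U. x < c}"
      using assms(1) by (intro card_mono) auto
    then show False
      using that card_less_nth_sorted_list_of_set[OF assms] assms(1) by simp
  qed
  show "card {x \<in> U. x < c} \<le> t" if "c \<le> ?u"
  proof -
    have "card {x \<in> U. x < c} \<le> card {x \<in> U. x < ?u}"
      using that assms(1) by (intro card_mono) auto
    then show ?thesis
      using card_less_nth_sorted_list_of_set[OF assms] by simp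
  qed
qed

lemma not_mem_between_nth_sorted_list_of_set:
  fixes U :: "'a::linorder set"
  assumes "finite U" "Suc t < card U"
    and "sorted_list_of_set U ! t < x" "x < sorted_list_of_set U ! Suc t"
  shows "x \<notin> U"
proof
  assume "x \<in> U"
  then obtain r where "r < card U" "x = sorted_list_of_set U ! r"
    using obtain_index_sorted_list_of_set[OF assms(1)] by blast
  then show False
    using assms sorted_list_of_set_nth_less_iff[OF assms(1)] by auto
qed

lemma signed_perm_abs_mem:
  assumes "signed_perm n w" "j \<in> {1..n}"
  shows "w j \<noteq> 0" "\<bar>w j\<bar> \<le> int n"
proof -
  have "nat \<bar>w j\<bar> \<in> {1..n}"
    using assms bij_betwE unfolding signed_perm_def by blast
  then show "w j \<noteq> 0" "\<bar>w j\<bar> \<le> int n" by auto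
qed

lemma signed_perm_inj_on:
  assumes "signed_perm n w"
  shows "inj_on w {1..n}"
proof (rule inj_onI)
  fix x y assume "x \<in> {1..n}" "y \<in> {1..n}" "w x = w y"
  moreover have "inj_on (\<lambda>i. nat \<bar>w i\<bar>) {1..n}"
    using assms bij_betw_imp_inj_on unfolding signed_perm_def by blast
  ultimately show "x = y"
    using inj_onD[of "\<lambda>i. nat \<bar>w i\<bar>" "{1..n}" x y] by simp
qed

lemma signed_perm_obtain_abs:
  assumes "signed_perm n w" "v \<in> {1..n}"
  obtains j where "j \<in> {1..n}" "\<bar>w j\<bar> = int v"
proof -
  have "v \<in> (\<lambda>i. nat \<bar>w i\<bar>) ` {1..n}"
    using assms bij_betw_imp_surj_on unfolding signed_perm_def by blast
  then obtain j where "j \<in> {1..n}" "v = nat \<bar>w j\<bar>"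
    by blast
  then show ?thesis
    using that[of j] by simp
qed

lemma left_descent_zeroI:
  assumes "j \<in> {1..n}" "w j = -1"
  shows "left_descent n w 0"
  using assms unfolding left_descent_def by auto

lemma left_descent_succ_beforeI:
  assumes "1 \<le> i" "i < n" "p \<in> {1..n}" "q \<in> {1..n}" "p < q"
    and "w p = int i + 1" "w q = int i"
  shows "left_descent n w i"
  using assms unfolding left_descent_def by blast

lemma left_descent_neg_succI:
  assumes "1 \<le> i" "i < n" "p \<in> {1..n}" "q \<in> {1..n}"
    and "w p = int i" "w q = -(int i + 1)"
  shows "left_descent n w i"
proof -
  have "p \<noteq> q"
    using assms by auto
  then consider "p < q" | "q < p"
    by linarith
  then show ?thesis
    using assms unfolding left_descent_def by cases blast+
qed

locale signed_perm_first_descent =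
  fixes n k :: nat and w :: "nat \<Rightarrow> int"
  assumes signed_perm: "signed_perm n w"
    and first_descent: "first_right_descent n w k"
begin

lemma k_less_n: "k < n"
  using first_descent unfolding first_right_descent_def right_descent_def by auto

lemma no_descent_before: "j < k \<Longrightarrow> \<not> right_descent n w j"
  using first_descent unfolding first_right_descent_def by auto

lemma prefix_step_less:
  assumes "1 \<le> j" "j < k"
  shows "w j < w (Suc j)"
proof -
  have "w j \<le> w (Suc j)"
    using no_descent_before[of j] assms k_less_n unfolding right_descent_def by auto
  moreover have "j \<in> {1..n}" "Suc j \<in> {1..n}"
    using assms k_less_n by auto
  then have "w j \<noteq> w (Suc j)"
    using inj_on_eq_iff[OF signed_perm_inj_on[OF signed_perm]] by fastforce
  ultimately show ?thesis by simp
qed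

lemma prefix_less:
  assumes "1 \<le> i" "i < j" "j \<le> k"
  shows "w i < w j"
  using assms
proof (induction j)
  case (Suc j)
  then show ?case
    using prefix_step_less[of j] by (cases "i = j") auto
qed simp

lemma prefix_pos:
  assumes "1 \<le> p" "p \<le> k"
  shows "0 < w p"
proof -
  have "0 \<le> w 1"
    using no_descent_before[of 0] assms k_less_n unfolding right_descent_def by auto
  moreover have "w 1 \<noteq> 0"
    using signed_perm_abs_mem[OF signed_perm, of 1] k_less_n by auto
  ultimately show ?thesis
    using prefix_less[of 1 p] assms by (cases "p = 1") auto
qed

definition suffix_values :: "int set" where
  "suffix_values = w ` {k+1..n}"

definition u :: "nat \<Rightarrow> int" where
  "u s = sorted_list_of_set suffix_values ! (s - 1)"

lemma finite_suffix_values: "finite suffix_values"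
  unfolding suffix_values_def by simp

lemma card_suffix_values: "card suffix_values = n - k"
proof -
  have "inj_on w {k+1..n}"
    using signed_perm_inj_on[OF signed_perm] by (rule inj_on_subset) auto
  then show ?thesis
    unfolding suffix_values_def by (simp add: card_image)
qed

lemma beta_eq: "beta n w k s = (if u s < 0 then u s + 1 else u s)"
  unfolding beta_def u_def suffix_values_def Let_def by simp

lemma u_mem:
  assumes "1 \<le> s" "s \<le> n - k"
  shows "u s \<in> suffix_values"
  using assms nth_sorted_list_of_set_mem[OF finite_suffix_values, of "s - 1"]
  unfolding u_def card_suffix_values by simp

lemma u_less_Suc:
  assumes "1 \<le> s" "s < n - k"
  shows "u s < u (s + 1)"
  using assms sorted_list_of_set_nth_less_iff[OF finite_suffix_values, of "s - 1" s]
  unfolding u_def card_suffix_values by simp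

lemma not_mem_between_u:
  assumes "1 \<le> s" "s < n - k" "u s < x" "x < u (s + 1)"
  shows "x \<notin> suffix_values"
  using assms not_mem_between_nth_sorted_list_of_set[OF finite_suffix_values, of "s - 1" x]
  unfolding u_def card_suffix_values by simp

lemma card_less_le_iff_le_u:
  assumes "1 \<le> s" "s \<le> n - k"
  shows "card {x \<in> suffix_values. x < c} < s \<longleftrightarrow> c \<le> u s"
proof -
  have "card {x \<in> suffix_values. x < c} < s \<longleftrightarrow> card {x \<in> suffix_values. x < c} \<le> s - 1"
    using assms by linarith
  then show ?thesis
    using assms card_less_le_iff_le_nth_sorted_list_of_set[OF finite_suffix_values, of "s - 1" c]
    unfolding u_def card_suffix_values by simp
qed

lemma obtain_u_position:
  assumes "1 \<le> s" "s \<le> n - k"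
  obtains q where "q \<in> {k+1..n}" "w q = u s"
  using u_mem[OF assms] unfolding suffix_values_def by auto

lemma u_nonzero_bounded:
  assumes "1 \<le> s" "s \<le> n - k"
  shows "u s \<noteq> 0" "\<bar>u s\<bar> \<le> int n"
proof -
  obtain q where "q \<in> {k+1..n}" "w q = u s"
    using obtain_u_position[OF assms] .
  then show "u s \<noteq> 0" "\<bar>u s\<bar> \<le> int n"
    using signed_perm_abs_mem[OF signed_perm, of q] by auto
qed

lemma prefix_not_in_suffix_values:
  assumes "1 \<le> i" "i \<le> k"
  shows "w i \<notin> suffix_values"
proof
  assume "w i \<in> suffix_values"
  then obtain j where "j \<in> {k+1..n}" "w i = w j"
    unfolding suffix_values_def by blast
  moreover have "i \<in> {1..n}"
    using assms k_less_n by simp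
  ultimately show False
    using inj_onD[OF signed_perm_inj_on[OF signed_perm], of i j] assms by auto
qed

lemma acode_eq_card_suffix_values:
  assumes "1 \<le> i" "i \<le> k"
  shows "acode n w i = card {x \<in> suffix_values. x < w i}"
proof -
  let ?J = "{j \<in> {k+1..n}. w j < w i}"
  have "k < j" if "i < j" "w j < w i" for j
  proof (rule ccontr)
    assume "\<not> k < j"
    then have "w i < w j"
      using prefix_less[OF assms(1) that(1)] by simp
    then show False
      using that(2) by simp
  qed
  then have "{j. i < j \<and> j \<le> n \<and> w j < w i} = ?J"
    using assms(2) by fastforce
  then have "acode n w i = card ?J"
    unfolding acode_def by simp
  also have "\<dots> = card (w ` ?J)"
    by (rule card_image[symmetric], rule inj_on_subset[OF signed_perm_inj_on[OF signed_perm]]) auto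
  also have "w ` ?J = {x \<in> suffix_values. x < w i}"
    unfolding suffix_values_def by blast
  finally show ?thesis .
qed

lemma length_mu_eq_card_negative_suffix_values:
  "length (mu n w) = card {x \<in> suffix_values. x < 0}"
proof -
  let ?N = "{j \<in> {1..n}. w j < 0}"
  have "j \<in> {k+1..n}" if "j \<in> ?N" for j
  proof (rule ccontr)
    assume "j \<notin> {k+1..n}"
    then show False
      using that prefix_pos[of j] by auto
  qed
  then have "{x \<in> suffix_values. x < 0} = w ` ?N"
    unfolding suffix_values_def by auto
  moreover have "{nat (- w j) | j. j \<in> {1..n} \<and> w j < 0} = (\<lambda>x. nat (- x)) ` w ` ?N"
    by auto
  moreover have "inj_on (\<lambda>x. nat (- x)) {x \<in> suffix_values. x < (0::int)}"
    by (intro inj_onI) auto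
  ultimately show ?thesis
    unfolding mu_def by (simp add: card_image finite_suffix_values)
qed

lemma left_descent_of_suffix_value_pos:
  assumes "q \<in> {k+1..n}" "w q = int i" "1 \<le> i" "i < n"
    and "int i + 1 \<notin> suffix_values"
  shows "left_descent n w i"
proof -
  have q_range: "q \<in> {1..n}"
    using assms(1) by simp
  obtain p where p: "p \<in> {1..n}" "\<bar>w p\<bar> = int (i + 1)"
    using signed_perm_obtain_abs[OF signed_perm, of "i + 1"] assms(4) by auto
  show ?thesis
  proof (cases "w p = int i + 1")
    case True
    then have "p \<notin> {k+1..n}"
      using assms(5) unfolding suffix_values_def by force
    then have "p < q"
      using p(1) assms(1) by auto
    then show ?thesis
      using left_descent_succ_beforeI[OF assms(3,4) p(1) q_range] True assms(2) by simp
  next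
    case False
    then have "w p = -(int i + 1)"
      using p(2) by auto
    then show ?thesis
      using left_descent_neg_succI[OF assms(3,4) q_range p(1)] assms(2) by simp
  qed
qed

lemma left_descent_of_suffix_value_neg:
  assumes "q \<in> {1..n}" "w q = -(int i + 1)" "1 \<le> i" "i < n"
    and "- int i \<notin> suffix_values"
  shows "left_descent n w i"
proof -
  obtain p where p: "p \<in> {1..n}" "\<bar>w p\<bar> = int i"
    using signed_perm_obtain_abs[OF signed_perm, of i] assms(3,4) by auto
  have "w p \<noteq> - int i"
  proof
    assume wp: "w p = - int i"
    then have "p \<in> {k+1..n}"
      using p(1) prefix_pos[of p] assms(3) by (cases "p \<le> k") auto
    then have "w p \<in> suffix_values"
      unfolding suffix_values_def by simp
    then show False
      using assms(5) wp by simp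
  qed
  then have "w p = int i"
    using p(2) by auto
  then show ?thesis
    using left_descent_neg_succI[OF assms(3,4) p(1) assms(1)] assms(2) by simp
qed

lemma left_descent_at_beta_gap:
  assumes "1 \<le> s" "s < n - k" "beta n w k (s + 1) > beta n w k s + 1"
  shows "left_descent n w (nat \<bar>beta n w k s\<bar>)"
proof -
  have "s \<le> n - k"
    using assms(2) by simp
  then obtain q where q: "q \<in> {k+1..n}" "w q = u s"
    using obtain_u_position[OF assms(1)] by blast
  have nonzero: "u s \<noteq> 0" and bounded: "\<bar>u s\<bar> \<le> int n" "u (s + 1) \<le> int n"
    using u_nonzero_bounded[of s] u_nonzero_bounded[of "s + 1"] assms by auto
  have gap: "u s + 1 < u (s + 1)"
    using assms(3) beta_eq[of s] beta_eq[of "s + 1"] u_less_Suc[OF assms(1,2)]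
    by (auto split: if_splits)
  then have succ_missing: "u s + 1 \<notin> suffix_values"
    using not_mem_between_u[OF assms(1,2)] by simp
  consider (pos) "0 < u s" | (minus_one) "u s = -1" | (neg) "u s < -1"
    using nonzero by linarith
  then show ?thesis
  proof cases
    case pos
    then have "left_descent n w (nat (u s))"
      using left_descent_of_suffix_value_pos[OF q(1)] q(2) gap bounded succ_missing by simp
    then show ?thesis
      using beta_eq[of s] pos by simp
  next
    case minus_one
    then show ?thesis
      using beta_eq[of s] left_descent_zeroI[of q n w] q by simp
  next
    case neg
    define i where "i = nat (- u s - 1)"
    have i: "u s = -(int i + 1)" "1 \<le> i" "i < n"
      using neg bounded unfolding i_def by auto
    then have "left_descent n w i"
      using left_descent_of_suffix_value_neg[of q] q succ_missing by simp
    then show ?thesis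
      using beta_eq[of s] neg i(1) by simp
  qed
qed

lemma phi_eq_k_below_length_mu:
  assumes "s \<le> length (mu n w)"
  shows "phi n w k s = k"
proof -
  have "s \<le> acode n w i" if "i \<in> {1..k}" for i
  proof -
    have "{x \<in> suffix_values. x < 0} \<subseteq> {x \<in> suffix_values. x < w i}"
      using prefix_pos[of i] that by auto
    then have "card {x \<in> suffix_values. x < 0} \<le> card {x \<in> suffix_values. x < w i}"
      by (intro card_mono) (simp_all add: finite_suffix_values)
    then show ?thesis
      using assms that acode_eq_card_suffix_values[of i] length_mu_eq_card_negative_suffix_values
      by simp
  qed
  then have "{i \<in> {1..k}. s \<le> acode n w i} = {1..k}"
    by auto
  then show ?thesis
    unfolding phi_def by simp
qed

lemma phi_eq_phi_Suc_above_length_mu: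
  assumes "1 \<le> s" "s < n - k" "length (mu n w) < s"
    and "beta n w k (s + 1) = beta n w k s + 1"
  shows "phi n w k s = phi n w k (s + 1)"
proof -
  have "0 \<le> u s"
    using card_less_le_iff_le_u[of s 0] assms(1-3) length_mu_eq_card_negative_suffix_values
    by simp
  then have "0 < u s"
    using u_nonzero_bounded[of s] assms(1,2) by fastforce
  then have u_Suc: "u (s + 1) = u s + 1"
    using assms(4) beta_eq[of s] beta_eq[of "s + 1"] u_less_Suc[OF assms(1,2)] by auto
  have "s \<le> acode n w i \<longleftrightarrow> s + 1 \<le> acode n w i" if i: "i \<in> {1..k}" for i
  proof -
    have "w i \<noteq> u (s + 1)"
      using prefix_not_in_suffix_values[of i] u_mem[of "s + 1"] i assms(2) by auto
    moreover have "s \<le> acode n w i \<longleftrightarrow> u s < w i"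
      using card_less_le_iff_le_u[of s "w i"] acode_eq_card_suffix_values[of i] i assms(1,2)
      by auto
    moreover have "s + 1 \<le> acode n w i \<longleftrightarrow> u (s + 1) < w i"
      using card_less_le_iff_le_u[of "s + 1" "w i"] acode_eq_card_suffix_values[of i] i assms(2)
      by auto
    ultimately show ?thesis
      using u_Suc by auto
  qed
  then have "{i \<in> {1..k}. s \<le> acode n w i} = {i \<in> {1..k}. s + 1 \<le> acode n w i}"
    by blast
  then show ?thesis
    unfolding phi_def by simp
qed

end


theorem lemma11:
  fixes n k :: nat and w :: "nat \<Rightarrow> int"
  assumes "signed_perm n w"
    and "first_right_descent n w k"
  shows "(\<forall>s. 1 \<le> s \<and> s < n - k \<and> beta n w k (s + 1) > beta n w k s + 1
              \<longrightarrow> left_descent n w (nat \<bar>beta n w k s\<bar>))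
       \<and> (\<forall>s. 1 \<le> s \<and> s \<le> length (mu n w) \<longrightarrow> phi n w k s = k)
       \<and> (\<forall>s. 1 \<le> s \<and> s < n - k \<and> s > length (mu n w) \<and> beta n w k (s + 1) = beta n w k s + 1
              \<longrightarrow> phi n w k s = phi n w k (s + 1))"
proof -
  interpret signed_perm_first_descent n k w
    using assms by unfold_locales
  show ?thesis
    using left_descent_at_beta_gap phi_eq_k_below_length_mu phi_eq_phi_Suc_above_length_mu
    by blast
qed

end
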